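(* For $\epsilon>0$ sufficiently small, $R_\pi^\natural(S^1\times D^2,A_1)$ is homeomorphic to $S^2$. Explicitly, with $(\phi,\theta)$, $\phi\in[0,\pi]$, $\theta\in[0,2\pi]$, spherical-polar coordinates on $S^2$ and $\nu=\epsilon\sin\phi$, the map sending $(\phi,\theta)$ to the class of $$a=i\sigma_z,\qquad h=(\cos^2\nu+\sin^2\nu\sin^2\theta)^{-1/2}\big(i\sigma_x\cos\nu-i\sigma_z\sin\nu\sin\theta\big),$$ $$A=h\big(\cos\phi+i\sin\phi(\sigma_x\cos\theta+\sigma_y\sin\theta)\big),\qquad B=\cos\nu+i\sin\nu(\sigma_x\cos\theta+\sigma_y\sin\theta),$$ $$b=-ha^{-1}h^{-1},\qquad w=-1,$$ is a well-defined homeomorphism $S^2\to R_\pi^\natural(S^1\times D^2,A_1)$.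
   Context: Pauli matrices standard; $\hat r\cdot\vec\sigma=r_x\sigma_x+r_y\sigma_y+r_z\sigma_z$. Fix $\epsilon>0$. $R_\pi^\natural(S^1\times D^2,A_1)$ is the holonomy-perturbed traceless character variety of a solid torus containing an unknotted arc $A_1$, a meridional loop $H$ around it, an arc $W$ from $A_1$ to $H$, and a perturbation loop $P$; the fundamental group of the complement is $\langle A,B,a,b,h,w\mid hwaB=aBh,\ b=ha^{-1}w^{-1}h^{-1}\rangle$, and the longitude and meridian of a tubular neighborhood of $P$ are $\lambda_P=h^{-1}A$ and $\mu_P=B$. Concretely, $R_\pi^\natural(S^1\times D^2,A_1)$ is the space of tuples $(A,B,a,b,h,w)\in SU(2)^6$ with $\operatorname{tr}a=\operatorname{tr}h=0$, $w=-1$, $hwaB=aBh$, $b=ha^{-1}w^{-1}h^{-1}$, and such that whenever $h^{-1}A=\cos\phi+i\sin\phi\,\hat r\cdot\vec\sigma$ with $\phi\in\mathbb{R}$, $\hat r\in S^2$, one has $B=\cos\nu+i\sin\nu\,\hat r\cdot\vec\sigma$ with $\nu=\epsilon\sin\phi$; modulo simultaneous conjugation, with the quotient topology. *)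

theory Defs
  imports "HOL-Analysis.Analysis"
begin

type_synonym cmat = "complex^2^2"

definition mat2 :: "complex \<Rightarrow> complex \<Rightarrow> complex \<Rightarrow> complex \<Rightarrow> cmat" where
  "mat2 a b c d = (\<chi> i j. if i = 1 then (if j = 1 then a else b) else (if j = 1 then c else d))"

definition sigma_x :: cmat where "sigma_x = mat2 0 1 1 0"
definition sigma_y :: cmat where "sigma_y = mat2 0 (- \<i>) \<i> 0"
definition sigma_z :: cmat where "sigma_z = mat2 1 0 0 (-1)"

definition csc :: "complex \<Rightarrow> cmat \<Rightarrow> cmat" where
  "csc c M = (\<chi> i j. c * M$i$j)"

definition ctrans :: "cmat \<Rightarrow> cmat" where
  "ctrans M = (\<chi> i j. cnj (M$j$i))"

definition SU2 :: "cmat set" where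
  "SU2 = {U. U ** ctrans U = mat 1 \<and> det U = 1}"

definition quat :: "real \<Rightarrow> real \<Rightarrow> real \<Rightarrow> real \<Rightarrow> cmat" where
  "quat c x y z = csc (complex_of_real c) (mat 1)
     + csc \<i> (csc (complex_of_real x) sigma_x + csc (complex_of_real y) sigma_y
              + csc (complex_of_real z) sigma_z)"

type_synonym tup = "cmat \<times> cmat \<times> cmat \<times> cmat \<times> cmat \<times> cmat"

text \<open>The (unquotiented) set of representations defining the perturbed traceless
  character variety of (S^1 x D^2, A_1), with perturbation parameter eps.\<close>
definition Rep :: "real \<Rightarrow> tup set" where
  "Rep eps = {(A, B, a, b, h, w).
      A \<in> SU2 \<and> B \<in> SU2 \<and> a \<in> SU2 \<and> b \<in> SU2 \<and> h \<in> SU2 \<and> w \<in> SU2 \<and>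
      trace a = 0 \<and> trace h = 0 \<and> w = - mat 1 \<and>
      h ** w ** a ** B = a ** B ** h \<and>
      b = h ** matrix_inv a ** matrix_inv w ** matrix_inv h \<and>
      (\<forall>(\<phi>::real) (r::real^3). r \<in> sphere 0 1 \<and>
          matrix_inv h ** A = quat (cos \<phi>) (sin \<phi> * r$1) (sin \<phi> * r$2) (sin \<phi> * r$3)
        \<longrightarrow> (let \<nu> = eps * sin \<phi> in
              B = quat (cos \<nu>) (sin \<nu> * r$1) (sin \<nu> * r$2) (sin \<nu> * r$3)))}"

definition conj_tup :: "cmat \<Rightarrow> tup \<Rightarrow> tup" where
  "conj_tup g = (\<lambda>(A, B, a, b, h, w).
     (g ** A ** matrix_inv g, g ** B ** matrix_inv g, g ** a ** matrix_inv g,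
      g ** b ** matrix_inv g, g ** h ** matrix_inv g, g ** w ** matrix_inv g))"

definition conj_rel :: "tup set \<Rightarrow> (tup \<times> tup) set" where
  "conj_rel X = {(x, y). x \<in> X \<and> y \<in> X \<and> (\<exists>g\<in>SU2. y = conj_tup g x)}"

definition quotient_topology :: "'a topology \<Rightarrow> ('a \<times> 'a) set \<Rightarrow> 'a set topology" where
  "quotient_topology X r = topology (\<lambda>U. U \<subseteq> topspace X // r \<and> openin X (\<Union>U))"

definition charvar :: "real \<Rightarrow> tup set topology" where
  "charvar eps = quotient_topology (subtopology euclidean (Rep eps)) (conj_rel (Rep eps))"

definition sph :: "real \<Rightarrow> real \<Rightarrow> real^3" where
  "sph \<phi> \<theta> = vector [sin \<phi> * cos \<theta>, sin \<phi> * sin \<theta>, cos \<phi>]"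

definition param :: "real \<Rightarrow> real \<Rightarrow> real \<Rightarrow> tup" where
  "param eps \<phi> \<theta> =
     (let \<nu> = eps * sin \<phi>;
          a = csc \<i> sigma_z;
          h = csc (complex_of_real (1 / sqrt ((cos \<nu>)\<^sup>2 + (sin \<nu>)\<^sup>2 * (sin \<theta>)\<^sup>2)))
                (csc (\<i> * complex_of_real (cos \<nu>)) sigma_x
                 - csc (\<i> * complex_of_real (sin \<nu> * sin \<theta>)) sigma_z);
          A = h ** quat (cos \<phi>) (sin \<phi> * cos \<theta>) (sin \<phi> * sin \<theta>) 0;
          B = quat (cos \<nu>) (sin \<nu> * cos \<theta>) (sin \<nu> * sin \<theta>) 0;
          b = - (h ** matrix_inv a ** matrix_inv h);
          w = - mat 1
      in (A, B, a, b, h, w))"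

end

theory Submission
  imports Defs
begin

text \<open>Write \<open>SU(2)\<close> as the unit quaternions \<open>c + i (x \<sigma>\<^sub>x + y \<sigma>\<^sub>y + z \<sigma>\<^sub>z)\<close>. Conjugating, one may take
  \<open>a = k\<close> and then, rotating about the \<open>k\<close>-axis, \<open>h = \<alpha> i + \<beta> k\<close> with \<open>\<alpha> > 0\<close>: \<open>h = \<plusminus>k\<close> is impossible
  because the relation \<open>h w a B = a B h\<close> would force \<open>Re B = cos \<nu> = 0\<close>, which fails for small \<open>\<epsilon>\<close>.
  In this frame the relation also forces \<open>h\<^sup>-\<^sup>1A = z + x i + y j\<close> with \<open>(x, y, z) \<in> S\<^sup>2\<close>, and \<open>B\<close>
  (the perturbation of \<open>h\<^sup>-\<^sup>1A\<close>) then determines \<open>h\<close>. So the explicit family attached to points of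
  \<open>S\<^sup>2\<close> meets every conjugacy class, and reading off the coordinates of \<open>h\<^sup>-\<^sup>1A\<close> in the frame
  built from \<open>a\<close> and \<open>h\<close> is a continuous, conjugation invariant inverse.\<close>

section \<open>Quotient topologies\<close>

lemma openin_quotient_topology:
  assumes r: "equiv (topspace X) r"
  shows "openin (quotient_topology X r) U \<longleftrightarrow> U \<subseteq> topspace X // r \<and> openin X (\<Union>U)"
proof -
  define L where "L U \<longleftrightarrow> U \<subseteq> topspace X // r \<and> openin X (\<Union>U)" for U
  have "istopology L"
    unfolding istopology_def
  proof (intro conjI allI impI)
    fix U V assume "L U" "L V"
    moreover have "\<Union>(U \<inter> V) = \<Union>U \<inter> \<Union>V"
      using \<open>L U\<close> \<open>L V\<close> quotient_disj[OF r] unfolding L_def by blast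
    ultimately show "L (U \<inter> V)" unfolding L_def by auto
  next
    fix K assume "\<forall>U\<in>K. L U"
    moreover have "\<Union>(\<Union>K) = \<Union>((\<lambda>U. \<Union>U) ` K)" by blast
    ultimately show "L (\<Union>K)" unfolding L_def by (auto intro: openin_Union)
  qed
  then show ?thesis by (simp add: quotient_topology_def L_def[abs_def])
qed

lemma topspace_quotient_topology:
  assumes r: "equiv (topspace X) r"
  shows "topspace (quotient_topology X r) = topspace X // r"
proof
  show "topspace (quotient_topology X r) \<subseteq> topspace X // r"
    unfolding topspace_def openin_quotient_topology[OF r] by blast
  have "openin (quotient_topology X r) (topspace X // r)"
    unfolding openin_quotient_topology[OF r] Union_quotient[OF r] by simp
  then show "topspace X // r \<subseteq> topspace (quotient_topology X r)" by (rule openin_subset)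
qed

lemma the_elem_image_class:
  assumes r: "equiv A r" and "x \<in> A" and G: "\<And>x y. (x, y) \<in> r \<Longrightarrow> G x = G y"
  shows "the_elem (G ` (r `` {x})) = G x"
proof -
  have "G y = G x" if "y \<in> r `` {x}" for y using G[of x y] that by simp
  then have "G ` (r `` {x}) = {G x}" using equiv_class_self[OF r \<open>x \<in> A\<close>] by blast
  then show ?thesis by simp
qed

lemma continuous_map_to_quotient_topology:
  assumes r: "equiv (topspace X) r" and P: "continuous_map Y X P"
  shows "continuous_map Y (quotient_topology X r) (\<lambda>y. r `` {P y})"
  unfolding continuous_map topspace_quotient_topology[OF r]
proof (intro conjI allI impI)
  have PX: "P y \<in> topspace X" if "y \<in> topspace Y" for y
    using continuous_map_image_subset_topspace[OF P] that by blast
  then show "(\<lambda>y. r `` {P y}) ` topspace Y \<subseteq> topspace X // r" by (auto intro: quotientI)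
  fix U assume "openin (quotient_topology X r) U"
  then have U: "U \<subseteq> topspace X // r" "openin X (\<Union>U)" by (simp_all add: openin_quotient_topology[OF r])
  have "r `` {P y} \<in> U \<longleftrightarrow> P y \<in> \<Union>U" if "y \<in> topspace Y" for y
  proof
    assume "r `` {P y} \<in> U"
    then show "P y \<in> \<Union>U" using equiv_class_self[OF r PX[OF that]] by blast
  next
    assume "P y \<in> \<Union>U"
    then obtain C where "C \<in> U" "P y \<in> C" by blast
    moreover obtain z where "C = r `` {z}" using U(1) \<open>C \<in> U\<close> by (blast elim: quotientE)
    ultimately show "r `` {P y} \<in> U" using equiv_class_eq[OF r] by fastforce
  qed
  then have "{y \<in> topspace Y. r `` {P y} \<in> U} = {y \<in> topspace Y. P y \<in> \<Union>U}" by blast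
  then show "openin Y {y \<in> topspace Y. r `` {P y} \<in> U}"
    using openin_continuous_map_preimage[OF P U(2)] by simp
qed

lemma continuous_map_from_quotient_topology:
  assumes r: "equiv (topspace X) r" and G: "continuous_map X Y G"
    and G_class: "\<And>x y. (x, y) \<in> r \<Longrightarrow> G x = G y"
  shows "continuous_map (quotient_topology X r) Y (\<lambda>C. the_elem (G ` C))"
  unfolding continuous_map topspace_quotient_topology[OF r]
proof (intro conjI allI impI)
  have G_class_eq: "the_elem (G ` (r `` {x})) = G x" if "x \<in> topspace X" for x
    using r that G_class by (rule the_elem_image_class)
  show "(\<lambda>C. the_elem (G ` C)) ` (topspace X // r) \<subseteq> topspace Y"
    using G G_class_eq by (auto elim!: quotientE simp: continuous_map_def)
  fix V assume "openin Y V"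
  have "\<Union>{C \<in> topspace X // r. the_elem (G ` C) \<in> V} = {x \<in> topspace X. G x \<in> V}"
  proof (intro equalityI subsetI)
    fix x assume "x \<in> \<Union>{C \<in> topspace X // r. the_elem (G ` C) \<in> V}"
    then obtain z where "x \<in> r `` {z}" "z \<in> topspace X" "G z \<in> V"
      using G_class_eq by (auto elim!: quotientE)
    then show "x \<in> {x \<in> topspace X. G x \<in> V}" using G_class r by (auto simp: equiv_def refl_on_def)
  next
    fix x assume "x \<in> {x \<in> topspace X. G x \<in> V}"
    then show "x \<in> \<Union>{C \<in> topspace X // r. the_elem (G ` C) \<in> V}"
      using G_class_eq equiv_class_self[OF r] by (auto intro!: quotientI exI[of _ "r `` {x}"])
  qed
  then show "openin (quotient_topology X r) {C \<in> topspace X // r. the_elem (G ` C) \<in> V}"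
    unfolding openin_quotient_topology[OF r]
    using openin_continuous_map_preimage[OF G \<open>openin Y V\<close>] by auto
qed

lemma homeomorphic_map_quotient_topology:
  assumes r: "equiv (topspace X) r"
    and P: "continuous_map Y X P" and G: "continuous_map X Y G"
    and G_class: "\<And>x y. (x, y) \<in> r \<Longrightarrow> G x = G y"
    and GP: "\<And>y. y \<in> topspace Y \<Longrightarrow> G (P y) = y"
    and PG: "\<And>x. x \<in> topspace X \<Longrightarrow> (x, P (G x)) \<in> r"
  shows "homeomorphic_map Y (quotient_topology X r) (\<lambda>y. r `` {P y})"
  unfolding homeomorphic_map_maps homeomorphic_maps_def topspace_quotient_topology[OF r]
proof (intro exI[of _ "\<lambda>C. the_elem (G ` C)"] conjI ballI)
  have G_class_eq: "the_elem (G ` (r `` {x})) = G x" if "x \<in> topspace X" for x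
    using r that G_class by (rule the_elem_image_class)
  have PX: "P y \<in> topspace X" if "y \<in> topspace Y" for y
    using continuous_map_image_subset_topspace[OF P] that by blast
  show "continuous_map Y (quotient_topology X r) (\<lambda>y. r `` {P y})"
    using r P by (rule continuous_map_to_quotient_topology)
  show "continuous_map (quotient_topology X r) Y (\<lambda>C. the_elem (G ` C))"
    using r G G_class by (rule continuous_map_from_quotient_topology)
  show "the_elem (G ` (r `` {P y})) = y" if "y \<in> topspace Y" for y
    using that by (simp add: G_class_eq PX GP)
  show "r `` {P (the_elem (G ` C))} = C" if "C \<in> topspace X // r" for C
  proof -
    obtain x where x: "C = r `` {x}" "x \<in> topspace X" using \<open>C \<in> topspace X // r\<close> by (rule quotientE)
    then have "the_elem (G ` C) = G x" using G_class_eq by simp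
    then show ?thesis using x equiv_class_eq[OF r PG[OF x(2)]] by simp
  qed
qed

section \<open>Quaternion coordinates on \<open>SU(2)\<close>\<close>

type_synonym qtn = "real \<times> real \<times> real \<times> real"

text \<open>The product of the matrices \<open>quat c x y z\<close>; in the basis \<open>i\<sigma>\<^sub>x, i\<sigma>\<^sub>y, i\<sigma>\<^sub>z\<close> this is
  quaternion multiplication with the orientation reversed.\<close>
definition qmult :: "qtn \<Rightarrow> qtn \<Rightarrow> qtn" where
  "qmult p q = (case p of (a1, b1, c1, d1) \<Rightarrow> case q of (a2, b2, c2, d2) \<Rightarrow>
     (a1*a2 - b1*b2 - c1*c2 - d1*d2, a1*b2 + a2*b1 - (c1*d2 - d1*c2),
      a1*c2 + a2*c1 - (d1*b2 - b1*d2), a1*d2 + a2*d1 - (b1*c2 - c1*b2)))"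

definition qcnj :: "qtn \<Rightarrow> qtn" where
  "qcnj p = (case p of (c, x, y, z) \<Rightarrow> (c, -x, -y, -z))"

definition qsqnorm :: "qtn \<Rightarrow> real" where
  "qsqnorm p = (case p of (c, x, y, z) \<Rightarrow> c\<^sup>2 + x\<^sup>2 + y\<^sup>2 + z\<^sup>2)"

definition qmat :: "qtn \<Rightarrow> cmat" where
  "qmat p = (case p of (c, x, y, z) \<Rightarrow> quat c x y z)"

definition qrot :: "qtn \<Rightarrow> qtn \<Rightarrow> qtn" where
  "qrot g p = qmult (qmult g p) (qcnj g)"

definition qim :: "qtn \<Rightarrow> qtn" where
  "qim p = (0, snd p)"

lemma cmat_eq_iff:
  "(M::cmat) = N \<longleftrightarrow> M$1$1 = N$1$1 \<and> M$1$2 = N$1$2 \<and> M$2$1 = N$2$1 \<and> M$2$2 = N$2$2"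
  by (auto simp: vec_eq_iff forall_2)

lemma matrix_mult_nth_2: "((M::cmat) ** N)$i$j = M$i$1 * N$1$j + M$i$2 * N$2$j"
  by (simp add: matrix_matrix_mult_def sum_2)

lemma quat_nth [simp]:
  "quat c x y z $1$1 = Complex c z" "quat c x y z $1$2 = Complex y x"
  "quat c x y z $2$1 = Complex (-y) x" "quat c x y z $2$2 = Complex c (-z)"
  by (simp_all add: quat_def csc_def sigma_x_def sigma_y_def sigma_z_def mat2_def mat_def
      complex_eq_iff)

lemma qmat_quat: "qmat (c, x, y, z) = quat c x y z"
  by (simp add: qmat_def)

lemma qmat_inject: "qmat p = qmat q \<longleftrightarrow> p = q"
  by (cases p; cases q) (auto simp: qmat_def cmat_eq_iff)

lemma qmat_mult: "qmat p ** qmat q = qmat (qmult p q)"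
  by (cases p; cases q) (simp add: qmat_def qmult_def cmat_eq_iff matrix_mult_nth_2
      complex_eq_iff algebra_simps)

lemma mat_1_qmat: "(mat 1 :: cmat) = qmat (1, 0, 0, 0)"
  by (simp add: qmat_def cmat_eq_iff mat_def complex_eq_iff)

lemma uminus_qmat: "- qmat p = qmat (- p)"
  by (cases p) (simp add: qmat_def cmat_eq_iff complex_eq_iff)

lemma uminus_mat_1_qmat: "- (mat 1 :: cmat) = qmat (-1, 0, 0, 0)"
  by (simp add: mat_1_qmat uminus_qmat)

lemma ctrans_qmat: "ctrans (qmat p) = qmat (qcnj p)"
  by (cases p) (simp add: qmat_def qcnj_def cmat_eq_iff ctrans_def complex_eq_iff)

lemma det_qmat: "det (qmat p) = complex_of_real (qsqnorm p)"
  by (cases p) (simp add: qmat_def qsqnorm_def det_2 complex_eq_iff power2_eq_square)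

lemma trace_qmat: "trace (qmat p) = complex_of_real (2 * fst p)"
  by (cases p) (simp add: qmat_def trace_def sum_2 complex_eq_iff)

lemma qmult_assoc: "qmult (qmult p q) r = qmult p (qmult q r)"
  by (cases p; cases q; cases r) (simp add: qmult_def algebra_simps)

lemma qmult_one [simp]: "qmult (1, 0, 0, 0) p = p" "qmult p (1, 0, 0, 0) = p"
  by (cases p; simp add: qmult_def)+

lemma qmult_real: "qmult (t, 0, 0, 0) p = t *\<^sub>R p" "qmult p (t, 0, 0, 0) = t *\<^sub>R p"
  by (cases p; simp add: qmult_def)+

lemma qmult_scaleR: "qmult (t *\<^sub>R p) q = t *\<^sub>R qmult p q" "qmult p (t *\<^sub>R q) = t *\<^sub>R qmult p q"
  by (cases p; cases q; simp add: qmult_def algebra_simps)+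

lemma qmult_qcnj_self: "qmult p (qcnj p) = (qsqnorm p, 0, 0, 0)" "qmult (qcnj p) p = (qsqnorm p, 0, 0, 0)"
  by (cases p; simp add: qmult_def qcnj_def qsqnorm_def power2_eq_square)+

lemma qcnj_qcnj [simp]: "qcnj (qcnj p) = p"
  by (cases p) (simp add: qcnj_def)

lemma qsqnorm_qcnj [simp]: "qsqnorm (qcnj p) = qsqnorm p"
  by (cases p) (simp add: qcnj_def qsqnorm_def)

lemma qcnj_qmult: "qcnj (qmult p q) = qmult (qcnj q) (qcnj p)"
  by (cases p; cases q) (simp add: qmult_def qcnj_def algebra_simps)

lemma qsqnorm_nonneg: "qsqnorm p \<ge> 0"
  by (cases p) (simp add: qsqnorm_def)

lemma qsqnorm_units [simp]: "qsqnorm (1, 0, 0, 0) = 1" "qsqnorm (-1, 0, 0, 0) = 1" "qsqnorm (0, 0, 0, 1) = 1"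
  by (simp_all add: qsqnorm_def)

lemma qsqnorm_qmult: "qsqnorm (qmult p q) = qsqnorm p * qsqnorm q"
  by (cases p; cases q) (simp add: qsqnorm_def qmult_def power2_eq_square algebra_simps)

lemma qsqnorm_scaleR: "qsqnorm (t *\<^sub>R p) = t\<^sup>2 * qsqnorm p"
  by (cases p) (simp add: qsqnorm_def algebra_simps power2_eq_square)

lemma qmult_qcnj_cancel: "qsqnorm h = 1 \<Longrightarrow> qmult (qcnj h) (qmult h p) = p"
  "qsqnorm h = 1 \<Longrightarrow> qmult h (qmult (qcnj h) p) = p"
  by (simp_all add: qmult_assoc[symmetric] qmult_qcnj_self)

lemma matrix_inv_eqI:
  fixes M N :: cmat
  assumes "M ** N = mat 1" "N ** M = mat 1"
  shows "matrix_inv M = N"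
proof -
  obtain N' where N': "M ** N' = mat 1" "N' ** M = mat 1" "matrix_inv M = N'"
    using someI_ex[of "\<lambda>N'. M ** N' = mat 1 \<and> N' ** M = mat 1"] assms
    unfolding matrix_inv_def by blast
  have "N' = N' ** (M ** N)" using assms by (simp add: matrix_mul_rid)
  also have "\<dots> = N" by (simp add: matrix_mul_assoc N' matrix_mul_lid)
  finally show ?thesis using N' by simp
qed

lemma matrix_inv_qmat: "qsqnorm p = 1 \<Longrightarrow> matrix_inv (qmat p) = qmat (qcnj p)"
  by (rule matrix_inv_eqI) (simp_all add: qmat_mult qmult_qcnj_self mat_1_qmat)

lemma qmat_in_SU2_iff: "qmat p \<in> SU2 \<longleftrightarrow> qsqnorm p = 1"
  by (simp add: SU2_def ctrans_qmat qmat_mult qmult_qcnj_self mat_1_qmat qmat_inject det_qmat)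

lemma SU2_obtain_qmat:
  assumes "U \<in> SU2"
  obtains p where "U = qmat p" "qsqnorm p = 1"
proof -
  define a b c d where "a = U$1$1" "b = U$1$2" "c = U$2$1" "d = U$2$2"
  have unitary: "U ** ctrans U = mat 1" and det: "det U = 1" using assms by (auto simp: SU2_def)
  have e1: "a * cnj a + b * cnj b = 1"
    using arg_cong[OF unitary, of "\<lambda>M. M$1$1"] by (simp add: matrix_mult_nth_2 ctrans_def mat_def a_b_c_d_def)
  have "a * cnj c + b * cnj d = 0"
    using arg_cong[OF unitary, of "\<lambda>M. M$1$2"] by (simp add: matrix_mult_nth_2 ctrans_def mat_def a_b_c_d_def)
  then have "cnj (a * cnj c + b * cnj d) = 0" by simp
  then have e2: "cnj a * c = - (cnj b * d)" by (simp add: add_eq_0_iff2 mult.commute)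
  have e3: "a * d - b * c = 1" using det by (simp add: det_2 a_b_c_d_def)
  have "(a * cnj a + b * cnj b) * d = cnj a * (a * d - b * c)"
    using e2 by (simp add: ring_distribs mult.commute mult.left_commute)
  then have d: "d = cnj a" using e1 e3 by simp
  have "- (a * cnj a + b * cnj b) * c = cnj b * (a * d - b * c)"
    using e2 by (simp add: ring_distribs mult.commute mult.left_commute)
  then have "- c = cnj b" using e1 e3 by simp
  then have c: "c = - cnj b" by (metis minus_minus)
  let ?p = "(Re a, Im b, Re b, Im a)"
  have "U = qmat ?p" using c d by (simp add: cmat_eq_iff qmat_def a_b_c_d_def complex_eq_iff)
  moreover have "qsqnorm ?p = 1"
    using arg_cong[OF e1, of Re] by (simp add: qsqnorm_def power2_eq_square)
  ultimately show thesis by (rule that)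
qed

lemma qrot_qmult: "qsqnorm g = 1 \<Longrightarrow> qrot g (qmult p q) = qmult (qrot g p) (qrot g q)"
  by (simp add: qrot_def qmult_assoc qmult_qcnj_cancel)

lemma qrot_qrot: "qrot g1 (qrot g2 p) = qrot (qmult g1 g2) p"
  by (simp add: qrot_def qcnj_qmult qmult_assoc)

lemma qrot_qcnj: "qrot g (qcnj p) = qcnj (qrot g p)"
  by (simp add: qrot_def qcnj_qmult qmult_assoc)

lemma qsqnorm_qrot: "qsqnorm g = 1 \<Longrightarrow> qsqnorm (qrot g p) = qsqnorm p"
  by (simp add: qrot_def qsqnorm_qmult)

lemma qrot_linear:
  "qrot g (p + q) = qrot g p + qrot g q" "qrot g (t *\<^sub>R p) = t *\<^sub>R qrot g p"
  by (cases g; cases p; cases q; simp add: qrot_def qmult_def qcnj_def algebra_simps)+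

lemma qrot_real: "qsqnorm g = 1 \<Longrightarrow> qrot g (t, 0, 0, 0) = (t, 0, 0, 0)"
  by (simp add: qrot_def qmult_real qmult_scaleR qmult_qcnj_self)

lemma qrot_qim: "qrot g (qim p) = qim (qrot g p)"
  by (cases g; cases p) (simp add: qrot_def qim_def qmult_def qcnj_def algebra_simps)

lemma fst_qrot: "qsqnorm g = 1 \<Longrightarrow> fst (qrot g p) = fst p"
proof -
  assume g: "qsqnorm g = 1"
  have "p = (fst p, 0, 0, 0) + qim p" by (cases p) (simp add: qim_def)
  then have "qrot g p = (fst p, 0, 0, 0) + qim (qrot g p)"
    by (metis g qrot_linear(1) qrot_qim qrot_real)
  then have "fst (qrot g p) = fst ((fst p, 0, 0, 0) + qim (qrot g p))" by (rule arg_cong)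
  then show ?thesis by (simp add: qim_def)
qed

lemma qrot_scaleR: "qrot (t *\<^sub>R g) p = t\<^sup>2 *\<^sub>R qrot g p"
  by (cases g; cases p) (simp add: qrot_def qmult_def qcnj_def algebra_simps power2_eq_square)

lemma qrot_normalised_intertwiner:
  assumes "qsqnorm q > 0" "qmult q f = qmult e q"
  shows "qsqnorm ((1 / sqrt (qsqnorm q)) *\<^sub>R q) = 1" "qrot ((1 / sqrt (qsqnorm q)) *\<^sub>R q) f = e"
proof -
  show "qsqnorm ((1 / sqrt (qsqnorm q)) *\<^sub>R q) = 1"
    using assms(1) by (simp add: qsqnorm_scaleR power_divide)
  have "qrot q f = qsqnorm q *\<^sub>R e"
    unfolding qrot_def assms(2) by (simp add: qmult_assoc qmult_qcnj_self qmult_real)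
  then show "qrot ((1 / sqrt (qsqnorm q)) *\<^sub>R q) f = e"
    using assms(1) by (simp add: qrot_scaleR power_divide)
qed

section \<open>The holonomy perturbation\<close>

definition sin_ratio :: "real \<Rightarrow> real \<Rightarrow> real" where
  "sin_ratio e s = (if s = 0 then e else sin (e * s) / s)"

definition qim_norm :: "qtn \<Rightarrow> real" where
  "qim_norm p = sqrt (qsqnorm (qim p))"

text \<open>For a unit quaternion \<open>M = cos \<phi> + sin \<phi> r\<close> this is \<open>cos \<nu> + sin \<nu> r\<close> with
  \<open>\<nu> = e sin \<phi>\<close>, written without reference to the (non-unique) polar form.\<close>
definition perturb :: "real \<Rightarrow> qtn \<Rightarrow> qtn" where
  "perturb e p = (cos (e * qim_norm p), 0, 0, 0) + sin_ratio e (qim_norm p) *\<^sub>R qim p"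

lemma sin_ratio_mult: "sin_ratio e s * s = sin (e * s)"
  by (simp add: sin_ratio_def)

lemma sin_ratio_abs_mult: "sin_ratio e \<bar>t\<bar> * t = sin (e * t)"
  using sin_ratio_mult[of e "\<bar>t\<bar>"] by (cases "t \<ge> 0") auto

lemma sin_ratio_pos:
  assumes "0 < e" "0 \<le> s" "e * s < pi"
  shows "sin_ratio e s > 0"
proof (cases "s = 0")
  case False
  then have "sin (e * s) > 0" using assms by (intro sin_gt_zero) auto
  then show ?thesis using False assms by (simp add: sin_ratio_def)
qed (use assms in \<open>simp add: sin_ratio_def\<close>)

lemma qim_norm_eq: "qim_norm (c, x, y, z) = sqrt (x\<^sup>2 + y\<^sup>2 + z\<^sup>2)"
  by (simp add: qim_norm_def qim_def qsqnorm_def add.assoc)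

lemma qim_norm_le_1:
  assumes "qsqnorm p = 1"
  shows "qim_norm p \<le> 1"
proof -
  obtain c x y z where p: "p = (c, x, y, z)" by (cases p)
  have "x\<^sup>2 + y\<^sup>2 + z\<^sup>2 \<le> 1" using assms zero_le_power2[of c] unfolding p qsqnorm_def prod.case by linarith
  then show ?thesis by (simp add: p qim_norm_eq)
qed

lemma qim_norm_qrot: "qsqnorm g = 1 \<Longrightarrow> qim_norm (qrot g p) = qim_norm p"
  by (simp add: qim_norm_def qrot_qim[symmetric] qsqnorm_qrot)

lemma perturb_eq:
  "perturb e (c, x, y, z) = (let s = sqrt (x\<^sup>2 + y\<^sup>2 + z\<^sup>2) in
     (cos (e * s), sin_ratio e s * x, sin_ratio e s * y, sin_ratio e s * z))"
  by (simp add: perturb_def qim_norm_eq qim_def Let_def)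

lemma fst_perturb: "fst (perturb e p) = cos (e * qim_norm p)"
  by (simp add: perturb_def qim_def)

lemma perturb_qrot: "qsqnorm g = 1 \<Longrightarrow> perturb e (qrot g p) = qrot g (perturb e p)"
  by (simp add: perturb_def qim_norm_qrot qrot_linear qrot_real qrot_qim)

lemma qsqnorm_perturb: "qsqnorm (perturb e p) = 1"
proof -
  obtain c x y z where p: "p = (c, x, y, z)" by (cases p)
  define s where "s = sqrt (x\<^sup>2 + y\<^sup>2 + z\<^sup>2)"
  have "(sin_ratio e s * x)\<^sup>2 + (sin_ratio e s * y)\<^sup>2 + (sin_ratio e s * z)\<^sup>2 = (sin_ratio e s * s)\<^sup>2"
    by (simp add: s_def power_mult_distrib algebra_simps)
  then have "(cos (e * s))\<^sup>2 + ((sin_ratio e s * x)\<^sup>2 + (sin_ratio e s * y)\<^sup>2 + (sin_ratio e s * z)\<^sup>2) = 1"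
    by (simp add: sin_ratio_mult)
  then show ?thesis
    unfolding p perturb_eq Let_def s_def[symmetric] qsqnorm_def by (simp add: add.assoc)
qed

lemma perturb_polar:
  assumes "x\<^sup>2 + y\<^sup>2 + z\<^sup>2 = 1"
  shows "perturb e (cos \<phi>, sin \<phi> * x, sin \<phi> * y, sin \<phi> * z)
    = (cos (e * sin \<phi>), sin (e * sin \<phi>) * x, sin (e * sin \<phi>) * y, sin (e * sin \<phi>) * z)"
proof -
  have "(sin \<phi> * x)\<^sup>2 + (sin \<phi> * y)\<^sup>2 + (sin \<phi> * z)\<^sup>2 = (sin \<phi>)\<^sup>2"
    using assms by (simp add: power_mult_distrib flip: distrib_left)
  then have "sqrt ((sin \<phi> * x)\<^sup>2 + (sin \<phi> * y)\<^sup>2 + (sin \<phi> * z)\<^sup>2) = \<bar>sin \<phi>\<bar>" by simp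
  moreover have "cos (e * \<bar>t\<bar>) = cos (e * t)" for t by (cases "t \<ge> 0") auto
  ultimately show ?thesis
    by (simp add: perturb_eq mult.assoc[symmetric] sin_ratio_abs_mult)
qed

lemma unit_qtn_polar:
  assumes "qsqnorm M = 1"
  obtains \<phi> x y z where "x\<^sup>2 + y\<^sup>2 + z\<^sup>2 = 1" "M = (cos \<phi>, sin \<phi> * x, sin \<phi> * y, sin \<phi> * z)"
proof -
  obtain c v1 v2 v3 where M: "M = (c, v1, v2, v3)" by (cases M)
  define s where "s = sqrt (v1\<^sup>2 + v2\<^sup>2 + v3\<^sup>2)"
  have s2: "s\<^sup>2 = 1 - c\<^sup>2" using assms by (simp add: M s_def qsqnorm_def)
  then have c: "\<bar>c\<bar> \<le> 1" using zero_le_power2[of s] by (simp add: abs_square_le_1)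
  have cos: "cos (arccos c) = c" and sin: "sin (arccos c) = s"
    using c s2 by (simp_all add: sin_arccos s_def)
  show thesis
  proof (cases "s = 0")
    case True
    then have "v1 = 0" "v2 = 0" "v3 = 0" by (auto simp: s_def add_nonneg_eq_0_iff)
    then show thesis using that[of 1 0 0 "arccos c"] M cos sin True by simp
  next
    case False
    have "(v1 / s)\<^sup>2 + (v2 / s)\<^sup>2 + (v3 / s)\<^sup>2 = 1"
      using False by (simp add: s_def power_divide add_divide_distrib[symmetric])
    then show thesis using that[of "v1 / s" "v2 / s" "v3 / s" "arccos c"] M cos sin False by simp
  qed
qed

lemma perturbation_condition_iff:
  assumes "qsqnorm M = 1"
  shows "(\<forall>\<phi> x y z. x\<^sup>2 + y\<^sup>2 + z\<^sup>2 = 1 \<and> M = (cos \<phi>, sin \<phi> * x, sin \<phi> * y, sin \<phi> * z) \<longrightarrow>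
           B = (cos (e * sin \<phi>), sin (e * sin \<phi>) * x, sin (e * sin \<phi>) * y, sin (e * sin \<phi>) * z))
         \<longleftrightarrow> B = perturb e M"
  using unit_qtn_polar[OF assms] perturb_polar by metis

section \<open>Representations in quaternion coordinates\<close>

definition rep_quat :: "real \<Rightarrow> qtn \<Rightarrow> qtn \<Rightarrow> qtn \<Rightarrow> qtn \<Rightarrow> qtn \<Rightarrow> qtn \<Rightarrow> bool" where
  "rep_quat e A B a b h w \<longleftrightarrow>
     qsqnorm A = 1 \<and> qsqnorm B = 1 \<and> qsqnorm a = 1 \<and> qsqnorm b = 1 \<and> qsqnorm h = 1 \<and> qsqnorm w = 1 \<and>
     fst a = 0 \<and> fst h = 0 \<and> w = (-1, 0, 0, 0) \<and>
     qmult (qmult (qmult h w) a) B = qmult (qmult a B) h \<and>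
     b = qmult (qmult (qmult h (qcnj a)) (qcnj w)) (qcnj h) \<and>
     B = perturb e (qmult (qcnj h) A)"

lemma mem_sphere_real3: "r \<in> sphere (0::real^3) 1 \<longleftrightarrow> (r$1)\<^sup>2 + (r$2)\<^sup>2 + (r$3)\<^sup>2 = 1"
  by (simp add: norm_vec_def L2_set_def sum_3)

lemma perturbation_condition_matrix_iff:
  assumes "qsqnorm h = 1" "qsqnorm A = 1"
  shows "(\<forall>\<phi> (r::real^3). r \<in> sphere 0 1 \<and>
            matrix_inv (qmat h) ** qmat A = quat (cos \<phi>) (sin \<phi> * r$1) (sin \<phi> * r$2) (sin \<phi> * r$3)
          \<longrightarrow> (let \<nu> = e * sin \<phi> in qmat B = quat (cos \<nu>) (sin \<nu> * r$1) (sin \<nu> * r$2) (sin \<nu> * r$3)))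
    \<longleftrightarrow> B = perturb e (qmult (qcnj h) A)" (is "?matrix \<longleftrightarrow> _")
proof -
  let ?M = "qmult (qcnj h) A"
  let ?quat = "\<forall>\<phi> x y z. x\<^sup>2 + y\<^sup>2 + z\<^sup>2 = 1 \<and> ?M = (cos \<phi>, sin \<phi> * x, sin \<phi> * y, sin \<phi> * z) \<longrightarrow>
     B = (cos (e * sin \<phi>), sin (e * sin \<phi>) * x, sin (e * sin \<phi>) * y, sin (e * sin \<phi>) * z)"
  have matrix: "?matrix \<longleftrightarrow> (\<forall>\<phi> (r::real^3). (r$1)\<^sup>2 + (r$2)\<^sup>2 + (r$3)\<^sup>2 = 1 \<and>
      ?M = (cos \<phi>, sin \<phi> * r$1, sin \<phi> * r$2, sin \<phi> * r$3) \<longrightarrow>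
      B = (cos (e * sin \<phi>), sin (e * sin \<phi>) * r$1, sin (e * sin \<phi>) * r$2, sin (e * sin \<phi>) * r$3))"
    unfolding mem_sphere_real3 using assms(1) by (simp add: matrix_inv_qmat qmat_mult Let_def
        flip: qmat_quat add: qmat_inject)
  have "?matrix \<longleftrightarrow> ?quat"
    unfolding matrix
  proof (intro iffI allI impI)
    fix \<phi> x y z
    assume "\<forall>\<phi> (r::real^3). (r$1)\<^sup>2 + (r$2)\<^sup>2 + (r$3)\<^sup>2 = 1 \<and>
      ?M = (cos \<phi>, sin \<phi> * r$1, sin \<phi> * r$2, sin \<phi> * r$3) \<longrightarrow>
      B = (cos (e * sin \<phi>), sin (e * sin \<phi>) * r$1, sin (e * sin \<phi>) * r$2, sin (e * sin \<phi>) * r$3)"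
      and "x\<^sup>2 + y\<^sup>2 + z\<^sup>2 = 1 \<and> ?M = (cos \<phi>, sin \<phi> * x, sin \<phi> * y, sin \<phi> * z)"
    then show "B = (cos (e * sin \<phi>), sin (e * sin \<phi>) * x, sin (e * sin \<phi>) * y, sin (e * sin \<phi>) * z)"
      by (elim allE[of _ \<phi>] allE[of _ "vector [x, y, z]"]) simp
  qed simp
  also have "\<dots> \<longleftrightarrow> B = perturb e ?M"
    by (rule perturbation_condition_iff) (simp add: qsqnorm_qmult assms)
  finally show ?thesis .
qed

lemma qmat_tuple_in_Rep_iff:
  "(qmat A, qmat B, qmat a, qmat b, qmat h, qmat w) \<in> Rep e \<longleftrightarrow> rep_quat e A B a b h w"
proof (cases "qsqnorm A = 1 \<and> qsqnorm B = 1 \<and> qsqnorm a = 1 \<and> qsqnorm b = 1 \<and> qsqnorm h = 1 \<and> qsqnorm w = 1")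
  case True
  then have inv: "matrix_inv (qmat a) = qmat (qcnj a)" "matrix_inv (qmat h) = qmat (qcnj h)"
    "matrix_inv (qmat w) = qmat (qcnj w)"
    by (simp_all add: matrix_inv_qmat)
  have su: "qmat A \<in> SU2" "qmat B \<in> SU2" "qmat a \<in> SU2" "qmat b \<in> SU2" "qmat h \<in> SU2" "qmat w \<in> SU2"
    using True by (simp_all add: qmat_in_SU2_iff)
  have tr: "trace (qmat p) = 0 \<longleftrightarrow> fst p = 0" for p by (simp add: trace_qmat)
  have w: "qmat w = - mat 1 \<longleftrightarrow> w = (-1, 0, 0, 0)" by (simp add: uminus_mat_1_qmat qmat_inject)
  have rel: "qmat h ** qmat w ** qmat a ** qmat B = qmat a ** qmat B ** qmat h
      \<longleftrightarrow> qmult (qmult (qmult h w) a) B = qmult (qmult a B) h"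
    by (simp add: qmat_mult qmat_inject)
  have b: "qmat b = qmat h ** matrix_inv (qmat a) ** matrix_inv (qmat w) ** matrix_inv (qmat h)
      \<longleftrightarrow> b = qmult (qmult (qmult h (qcnj a)) (qcnj w)) (qcnj h)"
    by (simp add: inv qmat_mult qmat_inject)
  show ?thesis
    unfolding Rep_def mem_Collect_eq prod.case rep_quat_def
    using True su tr w rel b perturbation_condition_matrix_iff[of h A e B] by simp
next
  case False
  then show ?thesis
    unfolding Rep_def mem_Collect_eq prod.case rep_quat_def qmat_in_SU2_iff by blast
qed

lemma Rep_obtain_qmat:
  assumes "x \<in> Rep e"
  obtains A B a b h w where "x = (qmat A, qmat B, qmat a, qmat b, qmat h, qmat w)" "rep_quat e A B a b h w"
proof -
  obtain A' B' a' b' h' w' where x: "x = (A', B', a', b', h', w')" by (cases x)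
  have SU2: "A' \<in> SU2" "B' \<in> SU2" "a' \<in> SU2" "b' \<in> SU2" "h' \<in> SU2" "w' \<in> SU2"
    using assms unfolding x Rep_def mem_Collect_eq prod.case by blast+
  obtain A where "A' = qmat A" using SU2_obtain_qmat[OF SU2(1)] .
  moreover obtain B where "B' = qmat B" using SU2_obtain_qmat[OF SU2(2)] .
  moreover obtain a where "a' = qmat a" using SU2_obtain_qmat[OF SU2(3)] .
  moreover obtain b where "b' = qmat b" using SU2_obtain_qmat[OF SU2(4)] .
  moreover obtain h where "h' = qmat h" using SU2_obtain_qmat[OF SU2(5)] .
  moreover obtain w where "w' = qmat w" using SU2_obtain_qmat[OF SU2(6)] .
  ultimately have "x = (qmat A, qmat B, qmat a, qmat b, qmat h, qmat w)" using x by simp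
  moreover from this have "rep_quat e A B a b h w" using assms qmat_tuple_in_Rep_iff by simp
  ultimately show thesis by (rule that)
qed

lemma conj_tup_qmat:
  "qsqnorm g = 1 \<Longrightarrow> conj_tup (qmat g) (qmat A, qmat B, qmat a, qmat b, qmat h, qmat w)
     = (qmat (qrot g A), qmat (qrot g B), qmat (qrot g a), qmat (qrot g b), qmat (qrot g h), qmat (qrot g w))"
  by (simp add: conj_tup_def matrix_inv_qmat qmat_mult qrot_def)

lemma conj_tup_conj_tup:
  assumes "qsqnorm g1 = 1" "qsqnorm g2 = 1"
  shows "conj_tup (qmat g2) (conj_tup (qmat g1) x) = conj_tup (qmat (qmult g2 g1)) x"
proof -
  have "matrix_inv (qmat (qmult g2 g1)) = matrix_inv (qmat g1) ** matrix_inv (qmat g2)"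
    using assms by (simp add: matrix_inv_qmat qsqnorm_qmult qcnj_qmult qmat_mult)
  then show ?thesis
    by (cases x) (simp add: conj_tup_def matrix_mul_assoc flip: qmat_mult)
qed

lemma conj_tup_mat_1: "conj_tup (mat 1) x = x"
proof -
  have "matrix_inv (mat 1 :: cmat) = mat 1" by (rule matrix_inv_eqI) (simp_all add: matrix_mul_lid)
  then show ?thesis by (cases x) (simp add: conj_tup_def matrix_mul_lid matrix_mul_rid)
qed

lemma equiv_conj_rel: "equiv X (conj_rel X)"
proof (rule equivI)
  show "conj_rel X \<subseteq> X \<times> X" by (auto simp: conj_rel_def)
  have "mat 1 \<in> SU2" by (simp add: mat_1_qmat qmat_in_SU2_iff qsqnorm_def)
  then show "refl_on X (conj_rel X)"
    by (auto intro!: refl_onI simp: conj_rel_def conj_tup_mat_1 intro: bexI[of _ "mat 1"])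
  show "sym (conj_rel X)"
  proof (rule symI)
    fix x y assume "(x, y) \<in> conj_rel X"
    then obtain g where xy: "x \<in> X" "y \<in> X" and "g \<in> SU2" and y: "y = conj_tup g x"
      unfolding conj_rel_def by blast
    then obtain p where g: "g = qmat p" and p: "qsqnorm p = 1" by (metis SU2_obtain_qmat)
    have "conj_tup (qmat (qcnj p)) y = x"
      using p by (simp add: y g conj_tup_conj_tup qmult_qcnj_self flip: mat_1_qmat add: conj_tup_mat_1)
    moreover have "qmat (qcnj p) \<in> SU2" using p by (simp add: qmat_in_SU2_iff)
    ultimately show "(y, x) \<in> conj_rel X" using xy unfolding conj_rel_def by blast
  qed
  show "trans (conj_rel X)"
  proof (rule transI)
    fix x y z assume "(x, y) \<in> conj_rel X" "(y, z) \<in> conj_rel X"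
    then obtain g1 g2 where xz: "x \<in> X" "z \<in> X" and "g1 \<in> SU2" "g2 \<in> SU2"
      and y: "y = conj_tup g1 x" and z: "z = conj_tup g2 y"
      unfolding conj_rel_def by blast
    then obtain p1 p2 where g: "g1 = qmat p1" "g2 = qmat p2" and p: "qsqnorm p1 = 1" "qsqnorm p2 = 1"
      by (metis SU2_obtain_qmat)
    have "z = conj_tup (qmat (qmult p2 p1)) x" using p by (simp add: z y g conj_tup_conj_tup)
    moreover have "qmat (qmult p2 p1) \<in> SU2" using p by (simp add: qmat_in_SU2_iff qsqnorm_qmult)
    ultimately show "(x, z) \<in> conj_rel X" using xz unfolding conj_rel_def by blast
  qed
qed

lemma rep_quat_qrot:
  assumes g: "qsqnorm g = 1" and R: "rep_quat e A B a b h w"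
  shows "rep_quat e (qrot g A) (qrot g B) (qrot g a) (qrot g b) (qrot g h) (qrot g w)"
proof -
  have w: "w = (-1, 0, 0, 0)"
    and rel: "qmult (qmult (qmult h w) a) B = qmult (qmult a B) h"
    and b: "b = qmult (qmult (qmult h (qcnj a)) (qcnj w)) (qcnj h)"
    and B: "B = perturb e (qmult (qcnj h) A)"
    using R unfolding rep_quat_def by blast+
  have "qmult (qmult (qmult (qrot g h) (qrot g w)) (qrot g a)) (qrot g B)
      = qmult (qmult (qrot g a) (qrot g B)) (qrot g h)"
    using rel by (simp flip: qrot_qmult[OF g])
  moreover have "qrot g b = qmult (qmult (qmult (qrot g h) (qcnj (qrot g a))) (qcnj (qrot g w))) (qcnj (qrot g h))"
    using b by (simp flip: qrot_qmult[OF g] qrot_qcnj)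
  moreover have "qrot g B = perturb e (qmult (qcnj (qrot g h)) (qrot g A))"
    using B by (simp add: perturb_qrot[OF g] flip: qrot_qmult[OF g] qrot_qcnj)
  moreover have "qrot g w = (-1, 0, 0, 0)" using g w by (simp add: qrot_real)
  ultimately show ?thesis
    using R unfolding rep_quat_def qsqnorm_qrot[OF g] fst_qrot[OF g] by blast
qed

section \<open>Normal form under conjugation\<close>

lemma qrot_to_k:
  assumes "qsqnorm a = 1" "fst a = 0"
  obtains g where "qsqnorm g = 1" "qrot g a = (0, 0, 0, 1)"
proof -
  obtain a1 a2 a3 where a: "a = (0, a1, a2, a3)" using assms(2) by (cases a) auto
  have unit: "a1\<^sup>2 + a2\<^sup>2 + a3\<^sup>2 = 1" using assms(1) a by (simp add: qsqnorm_def add.assoc)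
  show thesis
  proof (cases "a3 = -1")
    case True
    then have "a1 = 0" "a2 = 0" using unit by (simp_all add: add_nonneg_eq_0_iff)
    then have "qrot (0, 1, 0, 0) a = (0, 0, 0, 1)" using a True by (simp add: qrot_def qmult_def qcnj_def)
    then show thesis by (rule that[rotated]) (simp add: qsqnorm_def)
  next
    case False
    have "a3\<^sup>2 \<le> 1" using unit zero_le_power2[of a1] zero_le_power2[of a2] by linarith
    then have "1 + a3 > 0" using False by (simp add: abs_square_le_1 abs_le_iff)
    then have "qsqnorm (1 + a3, -a2, a1, 0) > 0" by (simp add: qsqnorm_def add_pos_nonneg)
    moreover have "qmult (1 + a3, -a2, a1, 0) a = qmult (0, 0, 0, 1) (1 + a3, -a2, a1, 0)"
      using unit a by (simp add: qmult_def algebra_simps power2_eq_square)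
    ultimately show thesis using qrot_normalised_intertwiner that by metis
  qed
qed

lemma qrot_about_k:
  assumes "h1\<^sup>2 + h2\<^sup>2 > 0"
  obtains g \<alpha> \<beta> where "qsqnorm g = 1" "qrot g (0, 0, 0, 1) = (0, 0, 0, 1)"
    "qrot g (0, h1, h2, h3) = (0, \<alpha>, 0, \<beta>)" "\<alpha> > 0"
proof (cases "h2 = 0 \<and> h1 < 0")
  case True
  then have "qrot (0, 0, 0, 1) (0, h1, h2, h3) = (0, -h1, 0, h3)"
    by (simp add: qrot_def qmult_def qcnj_def)
  moreover have "qrot (0, 0, 0, 1) (0, 0, 0, 1) = (0, 0, 0, 1)"
    by (simp add: qrot_def qmult_def qcnj_def)
  ultimately show thesis using that[of "(0, 0, 0, 1)" "- h1" h3] True by simp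
next
  case False
  define \<rho> where "\<rho> = sqrt (h1\<^sup>2 + h2\<^sup>2)"
  have \<rho>: "\<rho> > 0" "\<rho> * \<rho> = h1 * h1 + h2 * h2"
    using assms by (simp_all add: \<rho>_def flip: power2_eq_square)
  define q :: qtn where "q = (\<rho> + h1, 0, 0, h2)"
  have "qsqnorm q > 0"
  proof (cases "h2 = 0")
    case True
    then have "h1 > 0" using False assms by (cases "h1 = 0") auto
    then show ?thesis using \<rho> by (simp add: q_def qsqnorm_def add_pos_nonneg)
  qed (simp add: q_def qsqnorm_def add_nonneg_pos)
  moreover have "qmult q (0, h1, h2, h3) = qmult (0, \<rho>, 0, h3) q" "qmult q (0, 0, 0, 1) = qmult (0, 0, 0, 1) q"
    using \<rho> by (simp_all add: q_def qmult_def algebra_simps)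
  ultimately show thesis using qrot_normalised_intertwiner that \<rho>(1) by metis
qed

lemma perturb_unit_pos:
  assumes "0 < e" "e < pi / 2" "qsqnorm M = 1"
  shows "cos (e * qim_norm M) > 0" "sin_ratio e (qim_norm M) > 0"
proof -
  have s: "0 \<le> qim_norm M" by (simp add: qim_norm_def qsqnorm_nonneg)
  have "e * qim_norm M \<le> e"
    using assms qim_norm_le_1 mult_left_le[of "qim_norm M" e] by simp
  then have upper: "e * qim_norm M < pi / 2" using assms by linarith
  have lower: "0 \<le> e * qim_norm M" using assms s by simp
  show "cos (e * qim_norm M) > 0" using upper lower by (intro cos_gt_zero_pi) linarith+
  show "sin_ratio e (qim_norm M) > 0" using assms(1) s upper pi_gt_zero by (intro sin_ratio_pos) linarith+
qed

lemma k_relation_iff: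
  "qmult (qmult (qmult (0, h1, h2, h3) (-1, 0, 0, 0)) (0, 0, 0, 1)) (b0, b1, b2, b3)
     = qmult (qmult (0, 0, 0, 1) (b0, b1, b2, b3)) (0, h1, h2, h3)
   \<longleftrightarrow> h3 * b0 - h2 * b1 + h1 * b2 = 0 \<and> h1 * b3 = 0 \<and> h2 * b3 = 0 \<and> h3 * b3 = 0"
  by (auto simp: qmult_def algebra_simps)

text \<open>Once \<open>a = k\<close>, the relation \<open>h w a B = a B h\<close> and \<open>cos \<nu> > 0\<close> force \<open>B\<close> (hence \<open>h\<^sup>-\<^sup>1A\<close>)
  into the span of \<open>1, i, j\<close> and keep \<open>h\<close> off the \<open>k\<close>-axis.\<close>
lemma rep_quat_k_frame:
  assumes e: "0 < e" "e < pi / 2" and R: "rep_quat e A B (0, 0, 0, 1) b (0, h1, h2, h3) w"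
  obtains c v1 v2 b0 b1 b2 where "qmult (qcnj (0, h1, h2, h3)) A = (c, v1, v2, 0)"
    "B = (b0, b1, b2, 0)" "b0 > 0" "h3 * b0 - h2 * b1 + h1 * b2 = 0" "h1\<^sup>2 + h2\<^sup>2 > 0"
proof -
  obtain c v1 v2 v3 where M: "qmult (qcnj (0, h1, h2, h3)) A = (c, v1, v2, v3)"
    by (cases "qmult (qcnj (0, h1, h2, h3)) A")
  have unit: "qsqnorm (0, h1, h2, h3) = 1" "qsqnorm A = 1" and w: "w = (-1, 0, 0, 0)"
    and rel: "qmult (qmult (qmult (0, h1, h2, h3) w) (0, 0, 0, 1)) B = qmult (qmult (0, 0, 0, 1) B) (0, h1, h2, h3)"
    and "B = perturb e (qmult (qcnj (0, h1, h2, h3)) A)"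
    using R unfolding rep_quat_def by blast+
  then have B: "B = perturb e (c, v1, v2, v3)" using M by simp
  have h: "h1\<^sup>2 + h2\<^sup>2 + h3\<^sup>2 = 1" using unit by (simp add: qsqnorm_def add.assoc)
  have "qsqnorm (c, v1, v2, v3) = 1"
    using unit by (simp flip: M add: qsqnorm_qmult)
  from perturb_unit_pos[OF e this] obtain b0 \<sigma> where pos: "b0 > 0" "\<sigma> > 0"
    and B': "B = (b0, \<sigma> * v1, \<sigma> * v2, \<sigma> * v3)"
    using B by (simp add: perturb_eq qim_norm_eq Let_def)
  have eqs: "h3 * b0 - h2 * (\<sigma> * v1) + h1 * (\<sigma> * v2) = 0" "h1 * (\<sigma> * v3) = 0" "h2 * (\<sigma> * v3) = 0"
    "h3 * (\<sigma> * v3) = 0"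
    using rel unfolding w B' k_relation_iff by simp_all
  have "(h1\<^sup>2 + h2\<^sup>2 + h3\<^sup>2) * (\<sigma> * v3) = h1 * (h1 * (\<sigma> * v3)) + h2 * (h2 * (\<sigma> * v3)) + h3 * (h3 * (\<sigma> * v3))"
    by (simp add: power2_eq_square algebra_simps)
  then have "v3 = 0" using eqs h pos by simp
  moreover have "h1\<^sup>2 + h2\<^sup>2 > 0"
  proof (rule ccontr)
    assume "\<not> h1\<^sup>2 + h2\<^sup>2 > 0"
    then have "h1\<^sup>2 + h2\<^sup>2 = 0" using zero_le_power2[of h1] zero_le_power2[of h2] by linarith
    then have "h1 = 0" "h2 = 0" by (simp_all add: add_nonneg_eq_0_iff)
    then show False using eqs(1) h pos by simp
  qed
  ultimately show thesis using that M B' pos eqs(1) by simp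
qed

section \<open>The sphere of representations and its inverse\<close>

definition vec3 :: "real \<Rightarrow> real \<Rightarrow> real \<Rightarrow> real^3" where
  "vec3 x y z = (\<chi> i. if i = 1 then x else if i = 2 then y else z)"

lemma vec3_nth [simp]: "vec3 x y z $ 1 = x" "vec3 x y z $ 2 = y" "vec3 x y z $ 3 = z"
  by (simp_all add: vec3_def)

lemma vec3_eta: "vec3 (p$1) (p$2) (p$3) = p"
  by (simp add: vec_eq_iff forall_3)

definition h_of_B :: "qtn \<Rightarrow> qtn" where
  "h_of_B B = (case B of (b0, b1, b2, b3) \<Rightarrow> (1 / sqrt (b0\<^sup>2 + b2\<^sup>2)) *\<^sub>R (0, b0, 0, - b2))"

text \<open>The representation with \<open>a = k\<close> and \<open>h\<^sup>-\<^sup>1A = z + x i + y j\<close> for \<open>p = (x, y, z)\<close>; given \<open>B\<close>,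
  the relation \<open>h w a B = a B h\<close> leaves only the choice \<open>h_of_B B\<close> for \<open>h\<close>.\<close>
definition sphere_rep :: "real \<Rightarrow> real^3 \<Rightarrow> tup" where
  "sphere_rep e p = (let M = (p$3, p$1, p$2, 0); B = perturb e M; h = h_of_B B in
     (qmat (qmult h M), qmat B, qmat (0, 0, 0, 1), qmat (qmult (qmult h (0, 0, 0, 1)) (qcnj h)),
      qmat h, qmat (-1, 0, 0, 0)))"

lemma h_of_B_eq:
  assumes "b0 > 0"
  shows "h_of_B (b0, b1, b2, b3) = (0, b0 / sqrt (b0\<^sup>2 + b2\<^sup>2), 0, - b2 / sqrt (b0\<^sup>2 + b2\<^sup>2))"
    "qsqnorm (h_of_B (b0, b1, b2, b3)) = 1"
proof -
  show "h_of_B (b0, b1, b2, b3) = (0, b0 / sqrt (b0\<^sup>2 + b2\<^sup>2), 0, - b2 / sqrt (b0\<^sup>2 + b2\<^sup>2))"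
    by (simp add: h_of_B_def)
  then show "qsqnorm (h_of_B (b0, b1, b2, b3)) = 1"
    using assms by (simp add: qsqnorm_def power_divide add_divide_distrib[symmetric] add_pos_nonneg)
qed

lemma h_of_B_eqI:
  assumes "\<alpha>\<^sup>2 + \<beta>\<^sup>2 = 1" "\<alpha> > 0" "b0 > 0" "\<beta> * b0 + \<alpha> * b2 = 0"
  shows "h_of_B (b0, b1, b2, b3) = (0, \<alpha>, 0, \<beta>)"
proof -
  have b2: "- b2 = (b0 / \<alpha>) * \<beta>" using assms(2,4) by (simp add: field_simps)
  have "b0\<^sup>2 + b2\<^sup>2 = (b0 / \<alpha>)\<^sup>2 * (\<alpha>\<^sup>2 + \<beta>\<^sup>2)"
    using assms(2) arg_cong[OF b2, of "\<lambda>t. t\<^sup>2"] by (simp add: field_simps power2_eq_square)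
  then have N: "sqrt (b0\<^sup>2 + b2\<^sup>2) = b0 / \<alpha>" using assms(1-3) by simp
  have "h_of_B (b0, b1, b2, b3) = (\<alpha> / b0) *\<^sub>R (0, b0, 0, (b0 / \<alpha>) * \<beta>)"
    unfolding h_of_B_def prod.case N b2 by simp
  also have "\<dots> = (0, \<alpha>, 0, \<beta>)" using assms(2,3) by simp
  finally show ?thesis .
qed

lemma sphere_rep_in_Rep:
  assumes e: "0 < e" "e < pi / 2" and p: "p \<in> sphere 0 1"
  shows "sphere_rep e p \<in> Rep e"
proof -
  define M :: qtn where "M = (p$3, p$1, p$2, 0)"
  have M: "qsqnorm M = 1"
    using p[unfolded mem_sphere_real3] by (simp add: M_def qsqnorm_def algebra_simps)
  obtain b0 b1 b2 where B: "perturb e M = (b0, b1, b2, 0)" and b0: "b0 > 0"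
    using perturb_unit_pos(1)[OF e M] by (simp add: M_def perturb_def qim_def)
  define N where "N = sqrt (b0\<^sup>2 + b2\<^sup>2)"
  define h where "h = h_of_B (perturb e M)"
  have h: "h = (0, b0 / N, 0, - b2 / N)" "qsqnorm h = 1"
    using h_of_B_eq[OF b0] by (simp_all add: h_def B N_def)
  then have "fst h = 0" by simp
  have "rep_quat e (qmult h M) (perturb e M) (0, 0, 0, 1) (qmult (qmult h (0, 0, 0, 1)) (qcnj h)) h (-1, 0, 0, 0)"
    unfolding rep_quat_def
  proof (intro conjI)
    show "qmult (qmult (qmult h (-1, 0, 0, 0)) (0, 0, 0, 1)) (perturb e M)
        = qmult (qmult (0, 0, 0, 1) (perturb e M)) h"
      unfolding B h(1) k_relation_iff by (simp add: algebra_simps)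
    show "qmult (qmult h (0, 0, 0, 1)) (qcnj h)
        = qmult (qmult (qmult h (qcnj (0, 0, 0, 1))) (qcnj (-1, 0, 0, 0))) (qcnj h)"
      by (cases h) (simp add: qmult_def qcnj_def)
    show "perturb e M = perturb e (qmult (qcnj h) (qmult h M))"
      using h(2) by (simp add: qmult_qcnj_cancel)
  qed (use M h(2) \<open>fst h = 0\<close> in \<open>simp_all add: qsqnorm_qmult qsqnorm_perturb\<close>)
  then show ?thesis
    unfolding sphere_rep_def Let_def M_def[symmetric] h_def[symmetric] qmat_tuple_in_Rep_iff .
qed

definition qcoords :: "cmat \<Rightarrow> qtn" where
  "qcoords U = (Re (U$1$1), Im (U$1$2), Re (U$1$2), Im (U$1$1))"

definition perp_part :: "qtn \<Rightarrow> qtn \<Rightarrow> qtn" where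
  "perp_part h a = h + fst (qmult h a) *\<^sub>R a"

text \<open>For imaginary quaternions \<open>p, q\<close>, \<open>- Re (p q)\<close> is the dot product and \<open>Im (p q)\<close> is
  \<open>\<plusminus>\<close> the cross product. So for a unit imaginary \<open>a\<close>, \<open>perp_part h a\<close> is the component of \<open>h\<close>
  orthogonal to \<open>a\<close>, \<open>e1, e2\<close> below are an orthonormal basis of \<open>a\<^sup>\<bottom>\<close>, and the result lists
  the coordinates of \<open>h\<^sup>-\<^sup>1A\<close> in this basis and its real part.\<close>
definition sphere_coords_q :: "qtn \<Rightarrow> qtn \<Rightarrow> qtn \<Rightarrow> real^3" where
  "sphere_coords_q A h a = (let M = qmult (qcnj h) A; u = perp_part h a;
     e1 = (1 / sqrt (qsqnorm u)) *\<^sub>R u; e2 = - qim (qmult a e1)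
     in vec3 (- fst (qmult M e1)) (- fst (qmult M e2)) (fst M))"

definition sphere_coords :: "tup \<Rightarrow> real^3" where
  "sphere_coords x = (case x of (A, B, a, b, h, w) \<Rightarrow> sphere_coords_q (qcoords A) (qcoords h) (qcoords a))"

lemma qcoords_qmat [simp]: "qcoords (qmat p) = p"
  by (cases p) (simp add: qcoords_def qmat_def)

lemma fst_qmult_qrot: "qsqnorm g = 1 \<Longrightarrow> fst (qmult (qrot g p) (qrot g q)) = fst (qmult p q)"
  by (simp add: fst_qrot flip: qrot_qmult)

lemma perp_part_qrot: "qsqnorm g = 1 \<Longrightarrow> perp_part (qrot g h) (qrot g a) = qrot g (perp_part h a)"
  by (simp add: perp_part_def fst_qmult_qrot qrot_linear)

lemma sphere_coords_q_qrot:
  assumes g: "qsqnorm g = 1"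
  shows "sphere_coords_q (qrot g A) (qrot g h) (qrot g a) = sphere_coords_q A h a"
proof -
  have "qmult (qcnj (qrot g h)) (qrot g A) = qrot g (qmult (qcnj h) A)"
    using g by (simp add: qrot_qmult qrot_qcnj)
  moreover have "- qim (qmult (qrot g a) (qrot g p)) = qrot g (- qim (qmult a p))" for p
    using g qrot_linear(2)[of g "-1"] by (simp add: qrot_qim qrot_qmult)
  ultimately show ?thesis
    unfolding sphere_coords_q_def Let_def perp_part_qrot[OF g] qsqnorm_qrot[OF g]
    by (simp add: fst_qrot[OF g] fst_qmult_qrot[OF g] flip: qrot_linear(2))
qed

lemma sphere_coords_q_k_frame:
  assumes "\<alpha> > 0" "qmult (qcnj (0, \<alpha>, 0, \<beta>)) A = (c, v1, v2, v3)"
  shows "sphere_coords_q A (0, \<alpha>, 0, \<beta>) (0, 0, 0, 1) = vec3 v1 v2 c"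
proof -
  have "perp_part (0, \<alpha>, 0, \<beta>) (0, 0, 0, 1) = (0, \<alpha>, 0, 0)"
    by (simp add: perp_part_def qmult_def)
  moreover have "sqrt (qsqnorm (0, \<alpha>, 0, 0)) = \<alpha>" using assms(1) by (simp add: qsqnorm_def)
  ultimately show ?thesis
    using assms by (simp add: sphere_coords_q_def qmult_def qim_def)
qed

lemma rep_quat_normal_form:
  assumes e: "0 < e" "e < pi / 2" and R: "rep_quat e A B (0, 0, 0, 1) b (0, \<alpha>, 0, \<beta>) w" and "\<alpha> > 0"
  defines "p \<equiv> sphere_coords_q A (0, \<alpha>, 0, \<beta>) (0, 0, 0, 1)"
  shows "p \<in> sphere 0 1"
    and "sphere_rep e p = (qmat A, qmat B, qmat (0, 0, 0, 1), qmat b, qmat (0, \<alpha>, 0, \<beta>), qmat w)"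
proof -
  obtain c v1 v2 b0 b1 b2 where M: "qmult (qcnj (0, \<alpha>, 0, \<beta>)) A = (c, v1, v2, 0)"
    and B: "B = (b0, b1, b2, 0)" and "b0 > 0" and rel: "\<beta> * b0 + \<alpha> * b2 = 0"
    using rep_quat_k_frame[OF e R] by (metis diff_zero mult_zero_left)
  have h: "qsqnorm (0, \<alpha>, 0, \<beta>) = 1" and "qsqnorm A = 1" and w: "w = (-1, 0, 0, 0)"
    and b: "b = qmult (qmult (qmult (0, \<alpha>, 0, \<beta>) (qcnj (0, 0, 0, 1))) (qcnj w)) (qcnj (0, \<alpha>, 0, \<beta>))"
    and B': "B = perturb e (qmult (qcnj (0, \<alpha>, 0, \<beta>)) A)"
    using R unfolding rep_quat_def by blast+
  then have "qsqnorm (c, v1, v2, 0) = 1" by (simp flip: M add: qsqnorm_qmult)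
  moreover have p: "p = vec3 v1 v2 c" unfolding p_def using assms(4) M by (rule sphere_coords_q_k_frame)
  ultimately show "p \<in> sphere 0 1" unfolding mem_sphere_real3 by (simp add: qsqnorm_def algebra_simps)
  have "h_of_B B = (0, \<alpha>, 0, \<beta>)"
    using h \<open>b0 > 0\<close> \<open>\<alpha> > 0\<close> rel by (simp add: B qsqnorm_def h_of_B_eqI)
  moreover have "qmult (0, \<alpha>, 0, \<beta>) (c, v1, v2, 0) = A" using h by (simp flip: M add: qmult_qcnj_cancel)
  moreover have "qmult (qmult (0, \<alpha>, 0, \<beta>) (0, 0, 0, 1)) (qcnj (0, \<alpha>, 0, \<beta>)) = b"
    by (simp add: b w qmult_def qcnj_def)
  moreover have "perturb e (c, v1, v2, 0) = B" using B' M by simp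
  ultimately show "sphere_rep e p = (qmat A, qmat B, qmat (0, 0, 0, 1), qmat b, qmat (0, \<alpha>, 0, \<beta>), qmat w)"
    unfolding sphere_rep_def p Let_def vec3_nth w by simp
qed

lemma Rep_obtain_k_frame:
  assumes e: "0 < e" "e < pi / 2" and x: "x \<in> Rep e"
  obtains g A B b \<alpha> \<beta> w where "qsqnorm g = 1"
    "conj_tup (qmat g) x = (qmat A, qmat B, qmat (0, 0, 0, 1), qmat b, qmat (0, \<alpha>, 0, \<beta>), qmat w)"
    "rep_quat e A B (0, 0, 0, 1) b (0, \<alpha>, 0, \<beta>) w" "\<alpha> > 0"
proof -
  obtain A B a b h w where x: "x = (qmat A, qmat B, qmat a, qmat b, qmat h, qmat w)"
    and R: "rep_quat e A B a b h w"
    using Rep_obtain_qmat[OF x] .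
  have "qsqnorm a = 1" "fst a = 0" using R unfolding rep_quat_def by blast+
  then obtain g1 where g1: "qsqnorm g1 = 1" "qrot g1 a = (0, 0, 0, 1)" by (rule qrot_to_k)
  have R1: "rep_quat e (qrot g1 A) (qrot g1 B) (0, 0, 0, 1) (qrot g1 b) (qrot g1 h) (qrot g1 w)"
    using rep_quat_qrot[OF g1(1) R] g1(2) by simp
  then have "fst (qrot g1 h) = 0" by (simp add: rep_quat_def)
  then obtain h1 h2 h3 where h: "qrot g1 h = (0, h1, h2, h3)" by (cases "qrot g1 h") auto
  have "h1\<^sup>2 + h2\<^sup>2 > 0" using rep_quat_k_frame[OF e R1[unfolded h]] by blast
  then obtain g2 \<alpha> \<beta> where g2: "qsqnorm g2 = 1" "qrot g2 (0, 0, 0, 1) = (0, 0, 0, 1)"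
    "qrot g2 (0, h1, h2, h3) = (0, \<alpha>, 0, \<beta>)" "\<alpha> > 0"
    by (rule qrot_about_k)
  let ?g = "qmult g2 g1"
  let ?r = "\<lambda>p. qrot g2 (qrot g1 p)"
  have "qsqnorm ?g = 1" using g1 g2 by (simp add: qsqnorm_qmult)
  moreover have "conj_tup (qmat ?g) x
      = (qmat (?r A), qmat (?r B), qmat (0, 0, 0, 1), qmat (?r b), qmat (0, \<alpha>, 0, \<beta>), qmat (?r w))"
    using g1 g2 h by (simp add: x conj_tup_conj_tup[symmetric] conj_tup_qmat)
  moreover have "rep_quat e (?r A) (?r B) (0, 0, 0, 1) (?r b) (0, \<alpha>, 0, \<beta>) (?r w)"
    using rep_quat_qrot[OF g2(1) R1] g2 h by simp
  ultimately show thesis using that g2(4) by blast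
qed

lemma sphere_coords_conj_tup:
  assumes "x \<in> Rep e" "qsqnorm g = 1"
  shows "sphere_coords (conj_tup (qmat g) x) = sphere_coords x"
proof -
  obtain A B a b h w where x: "x = (qmat A, qmat B, qmat a, qmat b, qmat h, qmat w)"
    and "rep_quat e A B a b h w"
    using Rep_obtain_qmat[OF assms(1)] .
  show ?thesis
    unfolding x conj_tup_qmat[OF assms(2)] sphere_coords_def prod.case qcoords_qmat
    by (rule sphere_coords_q_qrot[OF assms(2)])
qed

lemma sphere_coords_conj_rel:
  assumes "(x, y) \<in> conj_rel (Rep e)"
  shows "sphere_coords y = sphere_coords x"
proof -
  obtain g where "x \<in> Rep e" "g \<in> SU2" "y = conj_tup g x"
    using assms unfolding conj_rel_def by blast
  then show ?thesis by (metis SU2_obtain_qmat sphere_coords_conj_tup)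
qed

lemma Rep_sphere_coords:
  assumes e: "0 < e" "e < pi / 2" and x: "x \<in> Rep e"
  shows "sphere_coords x \<in> sphere 0 1" "(x, sphere_rep e (sphere_coords x)) \<in> conj_rel (Rep e)"
proof -
  obtain g A B b \<alpha> \<beta> w where g: "qsqnorm g = 1"
    and gx: "conj_tup (qmat g) x = (qmat A, qmat B, qmat (0, 0, 0, 1), qmat b, qmat (0, \<alpha>, 0, \<beta>), qmat w)"
    and R: "rep_quat e A B (0, 0, 0, 1) b (0, \<alpha>, 0, \<beta>) w" and "\<alpha> > 0"
    using Rep_obtain_k_frame[OF e x] .
  have coords: "sphere_coords x = sphere_coords_q A (0, \<alpha>, 0, \<beta>) (0, 0, 0, 1)"
    using sphere_coords_conj_tup[OF x g] by (simp add: gx sphere_coords_def)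
  show "sphere_coords x \<in> sphere 0 1"
    unfolding coords by (rule rep_quat_normal_form(1)[OF e R \<open>\<alpha> > 0\<close>])
  have rep: "sphere_rep e (sphere_coords x) = conj_tup (qmat g) x"
    unfolding coords gx by (rule rep_quat_normal_form(2)[OF e R \<open>\<alpha> > 0\<close>])
  have "conj_tup (qmat g) x \<in> Rep e" using R by (simp add: gx qmat_tuple_in_Rep_iff)
  moreover have "\<exists>g'\<in>SU2. conj_tup (qmat g) x = conj_tup g' x"
    using g by (auto simp: qmat_in_SU2_iff)
  ultimately show "(x, sphere_rep e (sphere_coords x)) \<in> conj_rel (Rep e)"
    unfolding conj_rel_def mem_Collect_eq prod.case rep using x by (intro conjI)
qed

lemma sphere_coords_sphere_rep:
  assumes e: "0 < e" "e < pi / 2" and p: "p \<in> sphere 0 1"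
  shows "sphere_coords (sphere_rep e p) = p"
proof -
  define M :: qtn where "M = (p$3, p$1, p$2, 0)"
  have M: "qsqnorm M = 1"
    using p[unfolded mem_sphere_real3] by (simp add: M_def qsqnorm_def algebra_simps)
  obtain b0 b1 b2 b3 where B: "perturb e M = (b0, b1, b2, b3)" by (cases "perturb e M")
  have b0: "b0 > 0" using perturb_unit_pos(1)[OF e M] arg_cong[OF B, of fst] by (simp add: fst_perturb)
  define \<alpha> \<beta> where "\<alpha> = b0 / sqrt (b0\<^sup>2 + b2\<^sup>2)" and "\<beta> = - b2 / sqrt (b0\<^sup>2 + b2\<^sup>2)"
  have h: "h_of_B (perturb e M) = (0, \<alpha>, 0, \<beta>)" "qsqnorm (0, \<alpha>, 0, \<beta>) = 1"
    using h_of_B_eq[OF b0] by (simp_all add: \<alpha>_def \<beta>_def B)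
  have "\<alpha> > 0" using b0 by (simp add: \<alpha>_def \<beta>_def add_pos_nonneg)
  moreover have "qmult (qcnj (0, \<alpha>, 0, \<beta>)) (qmult (0, \<alpha>, 0, \<beta>) M) = (p$3, p$1, p$2, 0)"
    using h(2) by (simp add: qmult_qcnj_cancel M_def)
  ultimately have "sphere_coords_q (qmult (0, \<alpha>, 0, \<beta>) M) (0, \<alpha>, 0, \<beta>) (0, 0, 0, 1) = vec3 (p$1) (p$2) (p$3)"
    by (rule sphere_coords_q_k_frame)
  then show ?thesis
    unfolding sphere_rep_def Let_def M_def[symmetric] h(1) sphere_coords_def prod.case qcoords_qmat
    by (simp only: vec3_eta)
qed

section \<open>Continuity\<close>

lemma continuous_on_qmult [continuous_intros]:
  assumes "continuous_on S f" "continuous_on S g"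
  shows "continuous_on S (\<lambda>x. qmult (f x) (g x))"
proof -
  have "qmult p q =
    (fst p * fst q - fst (snd p) * fst (snd q) - fst (snd (snd p)) * fst (snd (snd q)) - snd (snd (snd p)) * snd (snd (snd q)),
     fst p * fst (snd q) + fst q * fst (snd p) - (fst (snd (snd p)) * snd (snd (snd q)) - snd (snd (snd p)) * fst (snd (snd q))),
     fst p * fst (snd (snd q)) + fst q * fst (snd (snd p)) - (snd (snd (snd p)) * fst (snd q) - fst (snd p) * snd (snd (snd q))),
     fst p * snd (snd (snd q)) + fst q * snd (snd (snd p)) - (fst (snd p) * fst (snd (snd q)) - fst (snd (snd p)) * fst (snd q)))"
    for p q by (cases p; cases q) (simp add: qmult_def)
  then show ?thesis using assms by (simp only:) (intro continuous_intros)
qed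

lemma continuous_on_qcnj [continuous_intros]: "continuous_on S f \<Longrightarrow> continuous_on S (\<lambda>x. qcnj (f x))"
proof -
  have "qcnj p = (fst p, - fst (snd p), - fst (snd (snd p)), - snd (snd (snd p)))" for p
    by (cases p) (simp add: qcnj_def)
  then show "continuous_on S f \<Longrightarrow> continuous_on S (\<lambda>x. qcnj (f x))" by (simp only:) (intro continuous_intros)
qed

lemma continuous_on_qsqnorm [continuous_intros]: "continuous_on S f \<Longrightarrow> continuous_on S (\<lambda>x. qsqnorm (f x))"
proof -
  have "qsqnorm p = (fst p)\<^sup>2 + (fst (snd p))\<^sup>2 + (fst (snd (snd p)))\<^sup>2 + (snd (snd (snd p)))\<^sup>2" for p
    by (cases p) (simp add: qsqnorm_def)
  then show "continuous_on S f \<Longrightarrow> continuous_on S (\<lambda>x. qsqnorm (f x))" by (simp only:) (intro continuous_intros)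
qed

lemma continuous_on_qim [continuous_intros]: "continuous_on S f \<Longrightarrow> continuous_on S (\<lambda>x. qim (f x))"
  unfolding qim_def by (intro continuous_intros)

lemma qmat_decompose:
  "qmat p = fst p *\<^sub>R qmat (1, 0, 0, 0) + fst (snd p) *\<^sub>R qmat (0, 1, 0, 0)
    + fst (snd (snd p)) *\<^sub>R qmat (0, 0, 1, 0) + snd (snd (snd p)) *\<^sub>R qmat (0, 0, 0, 1)"
  by (cases p) (simp add: cmat_eq_iff qmat_def complex_eq_iff)

lemma continuous_on_qmat [continuous_intros]: "continuous_on S f \<Longrightarrow> continuous_on S (\<lambda>x. qmat (f x))"
  by (subst qmat_decompose) (intro continuous_intros)

lemma continuous_on_qcoords [continuous_intros]: "continuous_on S f \<Longrightarrow> continuous_on S (\<lambda>x. qcoords (f x))"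
  unfolding qcoords_def by (intro continuous_intros)

lemma continuous_on_vec3 [continuous_intros]:
  assumes "continuous_on S f" "continuous_on S g" "continuous_on S h"
  shows "continuous_on S (\<lambda>x. vec3 (f x) (g x) (h x))"
  unfolding vec3_def
proof (intro continuous_on_vec_lambda)
  fix i :: 3
  show "continuous_on S (\<lambda>x. if i = 1 then f x else if i = 2 then g x else h x)"
    by (cases "i = 1"; cases "i = 2") (simp_all add: assms)
qed

lemma isCont_sin_ratio: "isCont (sin_ratio e) s"
proof (cases "s = 0")
  case False
  have "eventually (\<lambda>t. t \<in> - {0}) (nhds s)" using False by (intro eventually_nhds_in_open) auto
  then have "eventually (\<lambda>t. sin_ratio e t = sin (e * t) / t) (nhds s)"
    by (rule eventually_mono) (simp add: sin_ratio_def)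
  moreover have "isCont (\<lambda>t. sin (e * t) / t) s" using False by (intro continuous_intros) auto
  ultimately show ?thesis by (simp add: isCont_cong)
next
  case True
  have "((\<lambda>t. sin (e * t)) has_real_derivative e) (at 0)"
    by (auto intro!: derivative_eq_intros)
  then have "(\<lambda>t. sin (e * t) / t) \<midarrow>0\<rightarrow> e" using DERIV_D by fastforce
  moreover have "eventually (\<lambda>t. sin_ratio e t = sin (e * t) / t) (at 0)"
    by (auto simp: eventually_at_filter sin_ratio_def)
  ultimately have "sin_ratio e \<midarrow>0\<rightarrow> e" using tendsto_cong by fastforce
  then show ?thesis using True by (simp add: isCont_def sin_ratio_def)
qed

lemma continuous_on_sin_ratio [continuous_intros]:
  "continuous_on S f \<Longrightarrow> continuous_on S (\<lambda>x. sin_ratio e (f x))"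
  by (rule continuous_on_compose2[of UNIV "sin_ratio e"])
    (auto intro: continuous_at_imp_continuous_on isCont_sin_ratio)

lemma continuous_on_perturb [continuous_intros]:
  fixes f :: "'a::t2_space \<Rightarrow> qtn"
  assumes "continuous_on S f"
  shows "continuous_on S (\<lambda>x. perturb e (f x))"
  unfolding perturb_def qim_norm_def by (intro continuous_intros assms)

lemma continuous_on_h_of_B [continuous_intros]:
  assumes "continuous_on S f" "\<forall>x\<in>S. fst (f x) \<noteq> 0"
  shows "continuous_on S (\<lambda>x. h_of_B (f x))"
proof -
  have "h_of_B B = (1 / sqrt ((fst B)\<^sup>2 + (fst (snd (snd B)))\<^sup>2)) *\<^sub>R (0, fst B, 0, - fst (snd (snd B)))" for B
    by (cases B) (simp add: h_of_B_def)
  then show ?thesis using assms by (simp only:) (intro continuous_intros; auto simp: add_pos_nonneg)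
qed

lemma continuous_on_sphere_rep:
  assumes "0 < e" "e < pi / 2"
  shows "continuous_on (sphere 0 1) (sphere_rep e)"
proof -
  have "fst (perturb e (p$3, p$1, p$2, 0)) \<noteq> 0" if "p \<in> sphere 0 1" for p :: "real^3"
    using perturb_unit_pos(1)[OF assms, of "(p$3, p$1, p$2, 0)"] that[unfolded mem_sphere_real3]
    by (simp add: fst_perturb qsqnorm_def algebra_simps)
  then show ?thesis unfolding sphere_rep_def Let_def by (intro continuous_intros) auto
qed

lemma continuous_on_sphere_coords_q [continuous_intros]:
  assumes "continuous_on S fA" "continuous_on S fh" "continuous_on S fa"
    "\<forall>x\<in>S. qsqnorm (perp_part (fh x) (fa x)) \<noteq> 0"
  shows "continuous_on S (\<lambda>x. sphere_coords_q (fA x) (fh x) (fa x))"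
  using assms unfolding sphere_coords_q_def Let_def perp_part_def
  by (intro continuous_intros) auto

lemma Rep_perp_part_pos:
  assumes e: "0 < e" "e < pi / 2" and x: "(A, B, a, b, h, w) \<in> Rep e"
  shows "qsqnorm (perp_part (qcoords h) (qcoords a)) > 0"
proof -
  obtain g A' B' b' \<alpha> \<beta> w' where g: "qsqnorm g = 1"
    and gx: "conj_tup (qmat g) (A, B, a, b, h, w) = (qmat A', qmat B', qmat (0, 0, 0, 1), qmat b', qmat (0, \<alpha>, 0, \<beta>), qmat w')"
    and "rep_quat e A' B' (0, 0, 0, 1) b' (0, \<alpha>, 0, \<beta>) w'" and "\<alpha> > 0"
    using Rep_obtain_k_frame[OF e x] .
  obtain A0 B0 a0 b0 h0 w0 where x0: "(A, B, a, b, h, w) = (qmat A0, qmat B0, qmat a0, qmat b0, qmat h0, qmat w0)"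
    and "rep_quat e A0 B0 a0 b0 h0 w0"
    using Rep_obtain_qmat[OF x] .
  have "qrot g h0 = (0, \<alpha>, 0, \<beta>)" "qrot g a0 = (0, 0, 0, 1)"
    using gx unfolding x0 conj_tup_qmat[OF g] by (simp_all add: qmat_inject)
  then have "qrot g (perp_part h0 a0) = (0, \<alpha>, 0, 0)"
    unfolding perp_part_qrot[OF g, symmetric] by (simp add: perp_part_def qmult_def)
  then have "qsqnorm (perp_part h0 a0) = qsqnorm (0, \<alpha>, 0, 0)" using qsqnorm_qrot[OF g] by metis
  then have "qsqnorm (perp_part h0 a0) = \<alpha>\<^sup>2" by (simp add: qsqnorm_def)
  then show ?thesis using x0 \<open>\<alpha> > 0\<close> by simp
qed

lemma continuous_on_sphere_coords:
  assumes "0 < e" "e < pi / 2"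
  shows "continuous_on (Rep e) sphere_coords"
proof -
  have eq: "sphere_coords = (\<lambda>x. sphere_coords_q (qcoords (fst x)) (qcoords (fst (snd (snd (snd (snd x))))))
      (qcoords (fst (snd (snd x)))))"
    by (auto simp: sphere_coords_def fun_eq_iff split: prod.splits)
  have "\<forall>x\<in>Rep e. qsqnorm (perp_part (qcoords (fst (snd (snd (snd (snd x))))))
      (qcoords (fst (snd (snd x))))) \<noteq> 0"
    using Rep_perp_part_pos[OF assms] by (metis less_irrefl prod.collapse)
  then show ?thesis unfolding eq by (intro continuous_on_sphere_coords_q continuous_intros)
qed

lemma sph_in_sphere: "sph \<phi> \<theta> \<in> sphere 0 1"
proof -
  have "(sin \<phi> * cos \<theta>)\<^sup>2 + (sin \<phi> * sin \<theta>)\<^sup>2 = (sin \<phi>)\<^sup>2"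
    by (simp add: power_mult_distrib flip: distrib_left)
  then show ?thesis unfolding mem_sphere_real3 sph_def vector_3 by simp
qed

lemma param_eq_sphere_rep:
  assumes e: "0 < e" "e < pi / 2" and "0 \<le> \<phi>" "\<phi> \<le> pi"
  shows "param e \<phi> \<theta> = sphere_rep e (sph \<phi> \<theta>)"
proof -
  define \<nu> where "\<nu> = e * sin \<phi>"
  define M :: qtn where "M = (cos \<phi>, sin \<phi> * cos \<theta>, sin \<phi> * sin \<theta>, 0)"
  define N where "N = sqrt ((cos \<nu>)\<^sup>2 + (sin \<nu> * sin \<theta>)\<^sup>2)"
  define h :: qtn where "h = (0, cos \<nu> / N, 0, - (sin \<nu> * sin \<theta>) / N)"
  have B: "perturb e M = (cos \<nu>, sin \<nu> * cos \<theta>, sin \<nu> * sin \<theta>, 0)"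
    using perturb_polar[of "cos \<theta>" "sin \<theta>" 0 e \<phi>] by (simp add: M_def \<nu>_def)
  have "0 \<le> sin \<phi>" "sin \<phi> \<le> 1" using assms(3,4) by (simp_all add: sin_ge_zero)
  moreover have "e * sin \<phi> \<le> e" using e \<open>sin \<phi> \<le> 1\<close> by (simp add: mult_left_le)
  ultimately have "0 \<le> \<nu>" "\<nu> < pi / 2" using e unfolding \<nu>_def by (simp, linarith)
  then have "cos \<nu> > 0" by (intro cos_gt_zero_pi) auto
  then have h: "h_of_B (perturb e M) = h" "qsqnorm h = 1"
    using h_of_B_eq[of "cos \<nu>" "sin \<nu> * cos \<theta>" "sin \<nu> * sin \<theta>" 0] by (simp_all add: B h_def N_def)
  have "csc (complex_of_real (1 / sqrt ((cos \<nu>)\<^sup>2 + (sin \<nu>)\<^sup>2 * (sin \<theta>)\<^sup>2)))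
      (csc (\<i> * complex_of_real (cos \<nu>)) sigma_x - csc (\<i> * complex_of_real (sin \<nu> * sin \<theta>)) sigma_z)
    = qmat h"
    by (simp add: h_def N_def qmat_def cmat_eq_iff csc_def sigma_x_def sigma_z_def mat2_def
        complex_eq_iff power_mult_distrib)
  moreover have "csc \<i> sigma_z = qmat (0, 0, 0, 1)"
    by (simp add: qmat_def cmat_eq_iff csc_def sigma_z_def mat2_def complex_eq_iff)
  moreover have "- (qmat h ** matrix_inv (qmat (0, 0, 0, 1)) ** matrix_inv (qmat h))
      = qmat (qmult (qmult h (0, 0, 0, 1)) (qcnj h))"
    using h(2) by (cases h) (simp add: matrix_inv_qmat qmat_mult uminus_qmat qmat_inject qcnj_def
        qmult_def algebra_simps)
  moreover have "quat (cos \<phi>) (sin \<phi> * cos \<theta>) (sin \<phi> * sin \<theta>) 0 = qmat M"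
    by (simp add: M_def qmat_quat)
  moreover have "quat (cos \<nu>) (sin \<nu> * cos \<theta>) (sin \<nu> * sin \<theta>) 0 = qmat (perturb e M)"
    unfolding B by (simp add: qmat_quat)
  ultimately have "param e \<phi> \<theta> = (qmat (qmult h M), qmat (perturb e M), qmat (0, 0, 0, 1),
      qmat (qmult (qmult h (0, 0, 0, 1)) (qcnj h)), qmat h, qmat (-1, 0, 0, 0))"
    unfolding param_def Let_def \<nu>_def[symmetric] by (simp add: qmat_mult uminus_mat_1_qmat)
  also have "\<dots> = sphere_rep e (sph \<phi> \<theta>)"
    unfolding sphere_rep_def Let_def by (simp add: sph_def h(1) flip: M_def)
  finally show ?thesis .
qed

lemma homeomorphic_map_sphere_charvar:
  assumes e: "0 < e" "e < pi / 2"
  shows "homeomorphic_map (top_of_set (sphere 0 1)) (charvar e) (\<lambda>p. conj_rel (Rep e) `` {sphere_rep e p})"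
  unfolding charvar_def
proof (rule homeomorphic_map_quotient_topology)
  show "equiv (topspace (top_of_set (Rep e))) (conj_rel (Rep e))" by (simp add: equiv_conj_rel)
  have "sphere_rep e \<in> sphere 0 1 \<rightarrow> Rep e" using sphere_rep_in_Rep[OF e] by blast
  then show "continuous_map (top_of_set (sphere 0 1)) (top_of_set (Rep e)) (sphere_rep e)"
    using continuous_on_sphere_rep[OF e] by (simp add: continuous_map_subtopology_eu)
  have "sphere_coords \<in> Rep e \<rightarrow> sphere 0 1" using Rep_sphere_coords(1)[OF e] by blast
  then show "continuous_map (top_of_set (Rep e)) (top_of_set (sphere 0 1)) sphere_coords"
    using continuous_on_sphere_coords[OF e] by (simp add: continuous_map_subtopology_eu)
  show "sphere_coords x = sphere_coords y" if "(x, y) \<in> conj_rel (Rep e)" for x y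
    using sphere_coords_conj_rel[OF that] by simp
  show "sphere_coords (sphere_rep e p) = p" if "p \<in> topspace (top_of_set (sphere 0 1))" for p
    using that sphere_coords_sphere_rep[OF e] by simp
  show "(x, sphere_rep e (sphere_coords x)) \<in> conj_rel (Rep e)" if "x \<in> topspace (top_of_set (Rep e))" for x
    using that Rep_sphere_coords(2)[OF e] by simp
qed

theorem theorem2p13:
  "\<exists>eps0>0. \<forall>eps. 0 < eps \<and> eps < eps0 \<longrightarrow>
     (\<forall>\<phi> \<theta>. 0 \<le> \<phi> \<and> \<phi> \<le> pi \<and> 0 \<le> \<theta> \<and> \<theta> \<le> 2 * pi \<longrightarrow> param eps \<phi> \<theta> \<in> Rep eps) \<and>
     (\<exists>F. homeomorphic_map (subtopology euclidean (sphere (0::real^3) 1)) (charvar eps) F \<and>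
          (\<forall>\<phi> \<theta>. 0 \<le> \<phi> \<and> \<phi> \<le> pi \<and> 0 \<le> \<theta> \<and> \<theta> \<le> 2 * pi \<longrightarrow>
             F (sph \<phi> \<theta>) = conj_rel (Rep eps) `` {param eps \<phi> \<theta>}))"
proof (intro exI[of _ "pi / 2"] conjI allI impI exI[of _ "\<lambda>p. conj_rel (Rep _) `` {sphere_rep _ p}"])
  fix e :: real assume "0 < e \<and> e < pi / 2"
  then have e: "0 < e" "e < pi / 2" by auto
  then show "homeomorphic_map (top_of_set (sphere 0 1)) (charvar e) (\<lambda>p. conj_rel (Rep e) `` {sphere_rep e p})"
    by (rule homeomorphic_map_sphere_charvar)
  fix \<phi> \<theta> :: real assume "0 \<le> \<phi> \<and> \<phi> \<le> pi \<and> 0 \<le> \<theta> \<and> \<theta> \<le> 2 * pi"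
  then have "param e \<phi> \<theta> = sphere_rep e (sph \<phi> \<theta>)" using param_eq_sphere_rep[OF e] by simp
  then show "param e \<phi> \<theta> \<in> Rep e"
    and "conj_rel (Rep e) `` {sphere_rep e (sph \<phi> \<theta>)} = conj_rel (Rep e) `` {param e \<phi> \<theta>}"
    using sphere_rep_in_Rep[OF e sph_in_sphere] by simp_all
qed (simp add: pi_gt_zero)

end
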